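(* Let $n\ge2$ and let $\Gamma:\mathbb{C}^n\to\mathbb{C}^n$ be a homogeneous quadratic polynomial map with real coefficients such that $\Gamma(x)$ and $x$ are linearly dependent for every $x\in C$. Then there exist $b\in\mathbb{R}^n$ and a real linear functional $\lambda$ on $\mathbb{R}^n$ such that $\Gamma(x)=(x,x)\,b+\lambda(x)\,x$ for all $x$.
   Context: $(\cdot,\cdot)$ denotes the standard Euclidean inner product on $\mathbb{R}^n$, extended to $\mathbb{C}^n$ complex-bilinearly; $\lambda$ is extended complex-linearly. The *asymptotic cone* is $C=\{x\in\mathbb{C}^n:(x,x)=0\}$. *)

theory Defs
  imports "HOL-Analysis.Analysis"
begin

text \<open>Complex-bilinear extension of the Euclidean inner product to C^n.\<close>
definition cbil :: "complex^'n \<Rightarrow> complex^'n \<Rightarrow> complex" where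
  "cbil x y = (\<Sum>i\<in>UNIV. x$i * y$i)"

definition real_homog_quadratic_map :: "(complex^'n \<Rightarrow> complex^'n) \<Rightarrow> bool" where
  "real_homog_quadratic_map G \<longleftrightarrow>
     (\<exists>c :: 'n \<Rightarrow> 'n \<Rightarrow> 'n \<Rightarrow> real. \<forall>x k.
        G x $ k = (\<Sum>i\<in>UNIV. \<Sum>j\<in>UNIV. complex_of_real (c k i j) * x$i * x$j))"

definition cdependent2 :: "complex^'n \<Rightarrow> complex^'n \<Rightarrow> bool" where
  "cdependent2 u v \<longleftrightarrow> (\<exists>a b :: complex. (a \<noteq> 0 \<or> b \<noteq> 0) \<and> a *s u + b *s v = 0)"

definition cvec :: "real^'n \<Rightarrow> complex^'n" where
  "cvec b = (\<chi> i. complex_of_real (b$i))"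

definition cext :: "(real^'n \<Rightarrow> real) \<Rightarrow> complex^'n \<Rightarrow> complex" where
  "cext l x = (\<Sum>i\<in>UNIV. complex_of_real (l (axis i 1)) * x$i)"

end

theory Submission
  imports Defs
begin

text \<open>
  After symmetrising the coefficients, write \<open>\<Gamma> x $ k = \<Sum>i j. s k i j x\<^sub>i x\<^sub>j\<close>.
  For \<open>p \<noteq> q\<close> the vector \<open>e\<^sub>p + \<i> e\<^sub>q\<close> lies on the asymptotic cone, so it is an
  eigenvector of \<open>\<Gamma>\<close>. Comparing real and imaginary parts of the components of
  \<open>\<Gamma>(e\<^sub>p + \<i> e\<^sub>q)\<close> shows that \<open>s k i i\<close> does not depend on \<open>i \<noteq> k\<close> (this is \<open>b\<^sub>k\<close>),
  that \<open>s k i j = 0\<close> for distinct \<open>i, j, k\<close>, and that \<open>2 s k j k = s j j j - s j k k\<close>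
  (this is \<open>\<lambda>\<^sub>j\<close>). These are exactly the coefficients of \<open>(x,x) b + \<lambda>(x) x\<close>.
\<close>

lemma double_sum_symmetrize:
  fixes c :: "'a \<Rightarrow> 'a \<Rightarrow> 'b::field_char_0"
  shows "(\<Sum>i\<in>A. \<Sum>j\<in>A. c i j * x i * x j) = (\<Sum>i\<in>A. \<Sum>j\<in>A. (c i j + c j i) / 2 * x i * x j)"
proof -
  have swap: "(\<Sum>i\<in>A. \<Sum>j\<in>A. c j i * x i * x j) = (\<Sum>i\<in>A. \<Sum>j\<in>A. c i j * x i * x j)"
    by (subst sum.swap) (simp add: mult.commute mult.left_commute)
  have "(\<Sum>i\<in>A. \<Sum>j\<in>A. (c i j + c j i) / 2 * x i * x j)
      = ((\<Sum>i\<in>A. \<Sum>j\<in>A. c i j * x i * x j) + (\<Sum>i\<in>A. \<Sum>j\<in>A. c j i * x i * x j)) / 2"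
    by (simp add: sum.distrib sum_divide_distrib add_divide_distrib distrib_right)
  then show ?thesis
    by (simp add: swap)
qed

definition quad_map :: "('n \<Rightarrow> 'n \<Rightarrow> 'n \<Rightarrow> real) \<Rightarrow> complex^'n \<Rightarrow> complex^'n" where
  "quad_map s x = (\<chi> k. \<Sum>i\<in>UNIV. \<Sum>j\<in>UNIV. complex_of_real (s k i j) * x$i * x$j)"

lemma real_homog_quadratic_map_symmetric:
  assumes "real_homog_quadratic_map \<Gamma>"
  shows "\<exists>s. (\<forall>k i j. s k i j = s k j i) \<and> \<Gamma> = quad_map s"
proof -
  obtain c where c: "\<And>x k. \<Gamma> x $ k = (\<Sum>i\<in>UNIV. \<Sum>j\<in>UNIV. complex_of_real (c k i j) * x$i * x$j)"
    using assms unfolding real_homog_quadratic_map_def by blast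
  define s where "s k i j = (c k i j + c k j i) / 2" for k i j
  have "\<Gamma> x $ k = quad_map s x $ k" for x k
    unfolding c quad_map_def s_def by (subst double_sum_symmetrize) simp
  then have "\<Gamma> = quad_map s"
    by (simp add: vec_eq_iff fun_eq_iff)
  moreover have "\<forall>k i j. s k i j = s k j i"
    by (simp add: s_def)
  ultimately show ?thesis by blast
qed

definition isotropic_vec :: "'n \<Rightarrow> 'n \<Rightarrow> complex^'n" where
  "isotropic_vec p q = (\<chi> t. if t = p then 1 else if t = q then \<i> else 0)"

lemma isotropic_vec_nth:
  "p \<noteq> q \<Longrightarrow> isotropic_vec p q $ t = (if t = p then 1 else 0) + (if t = q then \<i> else 0)"
  by (simp add: isotropic_vec_def)

lemma isotropic_vec_nonzero: "isotropic_vec p q \<noteq> 0"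
proof
  assume "isotropic_vec p q = 0"
  then have "isotropic_vec p q $ p = 0"
    by simp
  then show False
    by (simp add: isotropic_vec_def)
qed

lemma sum_mult_isotropic_vec:
  assumes "p \<noteq> q"
  shows "(\<Sum>j\<in>UNIV. f j * isotropic_vec p q $ j) = f p + \<i> * f q"
proof -
  have "f j * isotropic_vec p q $ j = (if j = p then f j else 0) + (if j = q then \<i> * f j else 0)" for j
    using assms by (simp add: isotropic_vec_nth algebra_simps)
  then show ?thesis
    by (simp add: sum.distrib)
qed

lemma cbil_isotropic_vec:
  assumes "p \<noteq> q"
  shows "cbil (isotropic_vec p q) (isotropic_vec p q) = 0"
  unfolding cbil_def sum_mult_isotropic_vec[OF assms] using assms by (simp add: isotropic_vec_nth)

lemma quad_map_isotropic_vec: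
  assumes "p \<noteq> q" and sym: "\<And>k i j. s k i j = s k j i"
  shows "quad_map s (isotropic_vec p q) $ k = Complex (s k p p - s k q q) (2 * s k p q)"
proof -
  have "quad_map s (isotropic_vec p q) $ k
      = (\<Sum>i\<in>UNIV. (\<Sum>j\<in>UNIV. complex_of_real (s k i j) * isotropic_vec p q $ j)
                    * isotropic_vec p q $ i)"
    by (simp add: quad_map_def sum_distrib_left sum_distrib_right mult_ac)
  also have "\<dots> = of_real (s k p p) + \<i> * of_real (s k p q)
                  + \<i> * (of_real (s k q p) + \<i> * of_real (s k q q))"
    using assms(1) by (simp add: sum_mult_isotropic_vec)
  also have "\<dots> = Complex (s k p p - s k q q) (2 * s k p q)"
    using sym[of k q p] by (simp add: complex_eq_iff)
  finally show ?thesis .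
qed

lemma cdependent2_imp_eq_smult:
  fixes u x :: "complex^'n::finite"
  assumes "x \<noteq> 0" and "cdependent2 u x"
  shows "\<exists>\<mu>. u = \<mu> *s x"
proof -
  obtain a b where ab: "a \<noteq> 0 \<or> b \<noteq> 0" "a *s u + b *s x = 0"
    using assms(2) unfolding cdependent2_def by blast
  have "a \<noteq> 0"
  proof
    assume "a = 0"
    with ab have "b *s x = 0" "b \<noteq> 0" by simp_all
    with assms(1) show False
      by (simp add: vec_eq_iff)
  qed
  with ab(2) have "u = (- b / a) *s x"
    by (simp add: vec_eq_iff field_simps eq_neg_iff_add_eq_0)
  then show ?thesis ..
qed

lemma eigen_isotropic_vec_coeffs:
  assumes pq: "p \<noteq> q" and sym: "\<And>k i j. s k i j = s k j i"
    and eigen: "quad_map s (isotropic_vec p q) = \<mu> *s isotropic_vec p q"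
  shows eigen_isotropic_vec_coeffs_off: "t \<noteq> p \<Longrightarrow> t \<noteq> q \<Longrightarrow> s t p p = s t q q \<and> s t p q = 0"
    and eigen_isotropic_vec_coeffs_cross: "2 * s q p q = s p p p - s p q q"
proof -
  have comp: "Complex (s t p p - s t q q) (2 * s t p q) = \<mu> * isotropic_vec p q $ t" for t
    using arg_cong[OF eigen, of "\<lambda>v. v $ t"] by (simp add: quad_map_isotropic_vec[where s = s, OF pq sym])
  show "s t p p = s t q q \<and> s t p q = 0" if "t \<noteq> p" "t \<noteq> q"
    using comp[of t] that pq by (simp add: isotropic_vec_nth complex_eq_iff)
  have "Complex (s q p p - s q q q) (2 * s q p q) = \<i> * Complex (s p p p - s p q q) (2 * s p p q)"
    using comp[of p] comp[of q] pq by (simp add: isotropic_vec_nth)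
  then show "2 * s q p q = s p p p - s p q q"
    by (simp add: complex_eq_iff)
qed

lemma coeffs_normal_form:
  fixes s :: "'n::finite \<Rightarrow> 'n \<Rightarrow> 'n \<Rightarrow> real"
  assumes card: "CARD('n) \<ge> 2" and sym: "\<And>k i j. s k i j = s k j i"
    and off: "\<And>p q t. p \<noteq> q \<Longrightarrow> t \<noteq> p \<Longrightarrow> t \<noteq> q \<Longrightarrow> s t p p = s t q q \<and> s t p q = 0"
    and cross: "\<And>p q. p \<noteq> q \<Longrightarrow> 2 * s q p q = s p p p - s p q q"
  shows "\<exists>b w :: real^'n. \<forall>k i j. s k i j =
           (if i = j then b$k else 0) + (if j = k then w$i / 2 else 0) + (if i = k then w$j / 2 else 0)"
proof -
  have "\<exists>p. p \<noteq> k" for k :: 'n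
  proof (rule ccontr)
    assume "\<nexists>p. p \<noteq> k"
    then have "(UNIV :: 'n set) = {k}" by auto
    then have "CARD('n) = card {k}" by (simp only:)
    with card show False by simp
  qed
  then have other: "(SOME p. p \<noteq> k) \<noteq> k" for k :: 'n
    by (rule someI_ex)
  define b :: "real^'n" where "b = (\<chi> k. s k (SOME p. p \<noteq> k) (SOME p. p \<noteq> k))"
  define w :: "real^'n" where "w = (\<chi> k. s k k k - b$k)"
  have diag: "s k i i = b$k" if "i \<noteq> k" for i k
    using off[of i "SOME p. p \<noteq> k" k] other[of k] that by (cases "i = (SOME p. p \<noteq> k)") (auto simp: b_def)
  have "s k i j = (if i = j then b$k else 0) + (if j = k then w$i / 2 else 0) + (if i = k then w$j / 2 else 0)"
    for k i j
  proof (cases "i = j")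
    case True
    then show ?thesis
      by (cases "i = k") (simp_all add: diag w_def)
  next
    case False
    then consider "i = k" | "j = k" | "i \<noteq> k" "j \<noteq> k"
      by blast
    then show ?thesis
    proof cases
      case 1
      then show ?thesis
        using False cross[of j k] diag[of k j] sym[of k k j] by (simp add: w_def)
    next
      case 2
      then show ?thesis
        using False cross[of i k] diag[of k i] by (simp add: w_def)
    next
      case 3
      then show ?thesis
        using False off[of i j k] by simp
    qed
  qed
  then show ?thesis by blast
qed

lemma double_sum_normal_form:
  fixes x :: "'n::finite \<Rightarrow> 'a::field_char_0"
  shows "(\<Sum>i\<in>UNIV. \<Sum>j\<in>UNIV.
            ((if i = j then B else 0) + (if j = k then L i / 2 else 0) + (if i = k then L j / 2 else 0))
            * x i * x j)
       = B * (\<Sum>i\<in>UNIV. x i * x i) + (\<Sum>i\<in>UNIV. L i * x i) * x k"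
proof -
  have "((if i = j then B else 0) + (if j = k then L i / 2 else 0) + (if i = k then L j / 2 else 0))
          * x i * x j
        = (if i = j then B * (x i * x j) else 0) + (if j = k then L i * x i * x k / 2 else 0)
          + (if i = k then L j * x j * x k / 2 else 0)" for i j
    by (auto simp: algebra_simps)
  moreover have "(\<Sum>j\<in>UNIV. if i = k then g j else 0) = (if i = k then sum g UNIV else 0)" for i and g :: "'n \<Rightarrow> 'a"
    by simp
  ultimately show ?thesis
    by (simp add: sum.distrib sum_distrib_left sum_distrib_right flip: sum_divide_distrib)
qed

lemma quad_map_normal_form:
  fixes b w :: "real^'n"
  assumes "\<And>k i j. s k i j =
           (if i = j then b$k else 0) + (if j = k then w$i / 2 else 0) + (if i = k then w$j / 2 else 0)"
  shows "quad_map s x = cbil x x *s cvec b + cext (inner w) x *s x"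
proof -
  have "quad_map s x $ k = (cbil x x *s cvec b + cext (inner w) x *s x) $ k" for k
  proof -
    have "quad_map s x $ k = (\<Sum>i\<in>UNIV. \<Sum>j\<in>UNIV.
            ((if i = j then complex_of_real (b$k) else 0) + (if j = k then complex_of_real (w$i) / 2 else 0)
             + (if i = k then complex_of_real (w$j) / 2 else 0)) * x$i * x$j)"
      unfolding quad_map_def assms by (intro vec_lambda_beta[THEN trans] sum.cong refl) simp
    also have "\<dots> = complex_of_real (b$k) * (\<Sum>i\<in>UNIV. x$i * x$i)
                    + (\<Sum>i\<in>UNIV. complex_of_real (w$i) * x$i) * x$k"
      by (rule double_sum_normal_form)
    also have "\<dots> = (cbil x x *s cvec b + cext (inner w) x *s x) $ k"
      by (simp add: cbil_def cvec_def cext_def mult.commute flip: cart_eq_inner_axis)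
    finally show ?thesis .
  qed
  then show ?thesis
    by (simp add: vec_eq_iff)
qed

theorem lemma3:
  fixes \<Gamma> :: "complex^'n \<Rightarrow> complex^'n"
  assumes "CARD('n) \<ge> 2"
    and "real_homog_quadratic_map \<Gamma>"
    and "\<And>x. cbil x x = 0 \<Longrightarrow> cdependent2 (\<Gamma> x) x"
  shows "\<exists>(b :: real^'n) (l :: real^'n \<Rightarrow> real). linear l \<and>
           (\<forall>x. \<Gamma> x = cbil x x *s cvec b + cext l x *s x)"
proof -
  obtain s where sym: "\<And>k i j. s k i j = s k j i" and \<Gamma>: "\<Gamma> = quad_map s"
    using real_homog_quadratic_map_symmetric[OF assms(2)] by blast
  have eigen: "\<exists>\<mu>. quad_map s (isotropic_vec p q) = \<mu> *s isotropic_vec p q" if "p \<noteq> q" for p q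
    using cdependent2_imp_eq_smult[OF isotropic_vec_nonzero assms(3)[OF cbil_isotropic_vec[OF that]]]
    unfolding \<Gamma> .
  have off: "s t p p = s t q q \<and> s t p q = 0" if "p \<noteq> q" "t \<noteq> p" "t \<noteq> q" for p q t
    using eigen[OF that(1)] eigen_isotropic_vec_coeffs_off[where s = s, OF that(1) sym] that by blast
  have cross: "2 * s q p q = s p p p - s p q q" if "p \<noteq> q" for p q
    using eigen[OF that] eigen_isotropic_vec_coeffs_cross[where s = s, OF that sym] by blast
  obtain b w :: "real^'n" where "\<And>k i j. s k i j =
           (if i = j then b$k else 0) + (if j = k then w$i / 2 else 0) + (if i = k then w$j / 2 else 0)"
    using coeffs_normal_form[where s = s, OF assms(1) sym off cross] by blast
  then have "\<Gamma> x = cbil x x *s cvec b + cext (inner w) x *s x" for x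
    unfolding \<Gamma> by (rule quad_map_normal_form)
  moreover have "linear (inner w)"
    by (simp add: bounded_linear.linear bounded_linear_inner_right)
  ultimately show ?thesis by blast
qed

end
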